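(* Let $\mu$ be a finite measure, $1<p<\infty$, and let $\mathcal{E}$ be a $w^*$-closed subalgebra of $L^{\infty}(\mu)$ containing the constants and satisfying Condition $(\alpha_p)$. Let $\gamma\ge 2$ be an integer. Then for every $\varphi\in L^p(\mu)$ with $\varphi\ge 1$ a.e. there exists $\Phi\in\mathcal{E}$ such that (O1) $\|1-\Phi\|_{L^p(\mu)}\le C_{p,\gamma}\|1-\varphi\|_{L^p(\mu)}$, and (O2) $|\Phi|\le |\varphi|^{-\gamma}$ a.e., where $C_{p,\gamma}$ depends only on $p$ and $\gamma$ (and the constant in Condition $(\alpha_p)$), not on $\varphi$.
   Context: Condition $(\alpha_p)$ for $\mathcal{E}$: there is a constant $C_0$ (depending only on $p$) such that for every nonnegative $u\in L^p(\mu)$ there is a sequence $(w_n)$ in $\mathcal{E}$ with $\operatorname{Re} w_n\ge 0$ a.e., $\operatorname{Re} w_n\to u$ weakly in $L^p(\mu)$, and $\|w_n\|_{L^p(\mu)}\le C_0\|u\|_{L^p(\mu)}$ for all $n$. *)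

theory Defs
  imports "HOL-Analysis.Analysis"
begin

definition memLp :: "'a measure \<Rightarrow> real \<Rightarrow> ('a \<Rightarrow> 'b::{banach,second_countable_topology}) \<Rightarrow> bool" where
  "memLp M p f \<longleftrightarrow> f \<in> borel_measurable M \<and> integrable M (\<lambda>x. norm (f x) powr p)"

definition normLp :: "'a measure \<Rightarrow> real \<Rightarrow> ('a \<Rightarrow> 'b::{banach,second_countable_topology}) \<Rightarrow> real" where
  "normLp M p f = (\<integral>x. norm (f x) powr p \<partial>M) powr (1 / p)"

definition memLinf :: "'a measure \<Rightarrow> ('a \<Rightarrow> complex) \<Rightarrow> bool" where
  "memLinf M f \<longleftrightarrow> f \<in> borel_measurable M \<and> (\<exists>B. AE x in M. norm (f x) \<le> B)"

definition Linf_subalgebra_with_constants :: "'a measure \<Rightarrow> ('a \<Rightarrow> complex) set \<Rightarrow> bool" where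
  "Linf_subalgebra_with_constants M E \<longleftrightarrow>
     (\<forall>f\<in>E. memLinf M f) \<and>
     (\<forall>c. (\<lambda>x. c) \<in> E) \<and>
     (\<forall>f\<in>E. \<forall>g\<in>E. (\<lambda>x. f x + g x) \<in> E) \<and>
     (\<forall>f\<in>E. \<forall>g\<in>E. (\<lambda>x. f x * g x) \<in> E) \<and>
     (\<forall>c. \<forall>f\<in>E. (\<lambda>x. c * f x) \<in> E)"

text \<open>E is weak-* closed in L^\<infinity>(M) = L^1(M)^*: every f in L^\<infinity>(M) lying in the
  weak-* closure of E (i.e. every basic weak-* neighbourhood of f, given by finitely many
  L^1 functions and \<epsilon> > 0, meets E) belongs to E.\<close>
definition weak_star_closed :: "'a measure \<Rightarrow> ('a \<Rightarrow> complex) set \<Rightarrow> bool" where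
  "weak_star_closed M E \<longleftrightarrow>
     (\<forall>f. memLinf M f \<longrightarrow>
        (\<forall>G::('a \<Rightarrow> complex) set. \<forall>\<epsilon>>0. finite G \<longrightarrow> (\<forall>g\<in>G. integrable M g) \<longrightarrow>
           (\<exists>e\<in>E. \<forall>g\<in>G. cmod (\<integral>x. (f x - e x) * g x \<partial>M) < \<epsilon>)) \<longrightarrow>
        f \<in> E)"

definition weak_conv_Lp :: "'a measure \<Rightarrow> real \<Rightarrow> (nat \<Rightarrow> 'a \<Rightarrow> real) \<Rightarrow> ('a \<Rightarrow> real) \<Rightarrow> bool" where
  "weak_conv_Lp M p v u \<longleftrightarrow>
     (\<forall>g::'a \<Rightarrow> real. memLp M (p / (p - 1)) g \<longrightarrow>
        (\<lambda>n. \<integral>x. v n x * g x \<partial>M) \<longlonglongrightarrow> (\<integral>x. u x * g x \<partial>M))"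

definition condition_alpha :: "'a measure \<Rightarrow> real \<Rightarrow> real \<Rightarrow> ('a \<Rightarrow> complex) set \<Rightarrow> bool" where
  "condition_alpha M p C0 E \<longleftrightarrow>
     (\<forall>u::'a \<Rightarrow> real. memLp M p u \<and> (AE x in M. 0 \<le> u x) \<longrightarrow>
        (\<exists>w::nat \<Rightarrow> 'a \<Rightarrow> complex.
           (\<forall>n. w n \<in> E) \<and>
           (\<forall>n. AE x in M. 0 \<le> Re (w n x)) \<and>
           weak_conv_Lp M p (\<lambda>n x. Re (w n x)) u \<and>
           (\<forall>n. normLp M p (w n) \<le> C0 * normLp M p u)))"

end

theory Submission
  imports Defs
begin

text \<open>Testing Condition (alpha_p) against r^(p-1) shows that every nonnegative r \<in> L^p has a
  positive approximant: some v \<in> E with Re v \<ge> 0, \<integral> |v|^p \<le> A \<integral> r^p and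
  \<integral> (max 0 (r - Re v))^p \<le> \<theta> \<integral> r^p, where \<theta> < 1 and A depend only on p and C0.
  Starting from u = max 0 (\<phi> - 1) and applying this greedily to the residuals
  max 0 (u - Re (v_0 + ... + v_(k-1))) gives increments with \<integral> |v_k|^p \<le> A \<theta>^k \<integral> u^p, so
  V = \<Sum> v_k converges a.e., Re V \<ge> u, and \<parallel>V\<parallel>_p is controlled by \<parallel>u\<parallel>_p. Then \<Phi> = exp (-\<gamma> V)
  lies in E, being a bounded a.e. limit of exponentials of elements of the weak-* closed algebra E;
  finally |\<Phi>| \<le> exp (-\<gamma> u) \<le> \<phi>^(-\<gamma>) and |1 - \<Phi>| \<le> \<gamma> |V|.\<close>

section \<open>Exponentials in a weak-* closed subalgebra\<close>

lemma
  assumes "Linf_subalgebra_with_constants M E"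
  shows subalgebra_const: "(\<lambda>x. c) \<in> E"
    and subalgebra_add: "f \<in> E \<Longrightarrow> g \<in> E \<Longrightarrow> (\<lambda>x. f x + g x) \<in> E"
    and subalgebra_mult: "f \<in> E \<Longrightarrow> g \<in> E \<Longrightarrow> (\<lambda>x. f x * g x) \<in> E"
    and subalgebra_scale: "f \<in> E \<Longrightarrow> (\<lambda>x. c * f x) \<in> E"
    and subalgebra_memLinf: "f \<in> E \<Longrightarrow> memLinf M f"
  using assms unfolding Linf_subalgebra_with_constants_def by auto

lemma
  assumes "Linf_subalgebra_with_constants M E" "f \<in> E"
  shows subalgebra_borel_measurable: "f \<in> borel_measurable M"
    and subalgebra_AE_bounded: "\<exists>B. AE x in M. cmod (f x) \<le> B"
  using subalgebra_memLinf[OF assms] unfolding memLinf_def by auto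

lemma subalgebra_power:
  assumes "Linf_subalgebra_with_constants M E" "f \<in> E"
  shows "(\<lambda>x. f x ^ n) \<in> E"
proof (induction n)
  case 0
  show ?case using subalgebra_const[OF assms(1), of 1] by simp
next
  case (Suc n)
  show ?case using subalgebra_mult[OF assms(1) assms(2) Suc] by simp
qed

lemma subalgebra_sum:
  fixes n :: nat
  assumes "Linf_subalgebra_with_constants M E" "\<And>j. h j \<in> E"
  shows "(\<lambda>x. \<Sum>j<n. h j x) \<in> E"
proof (induction n)
  case 0
  show ?case using subalgebra_const[OF assms(1), of 0] by simp
next
  case (Suc n)
  show ?case using subalgebra_add[OF assms(1) Suc assms(2)[of n]] by simp
qed

lemma bounded_AE_tendsto_integral_mult:
  fixes F :: "nat \<Rightarrow> 'a \<Rightarrow> complex"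
  assumes F_meas: "\<And>k. F k \<in> borel_measurable M"
    and F_bound: "\<And>k. AE x in M. cmod (F k x) \<le> B"
    and lim: "AE x in M. (\<lambda>k. F k x) \<longlonglongrightarrow> G x"
    and G_meas: "G \<in> borel_measurable M" and G_bound: "AE x in M. cmod (G x) \<le> B"
    and "integrable M g"
  shows "(\<lambda>k. \<integral>x. (G x - F k x) * g x \<partial>M) \<longlonglongrightarrow> 0"
proof -
  have "(\<lambda>k. \<integral>x. (G x - F k x) * g x \<partial>M) \<longlonglongrightarrow> (\<integral>x. 0 \<partial>M)"
  proof (rule integral_dominated_convergence[where w="\<lambda>x. 2 * B * cmod (g x)"])
    show "(\<lambda>x. (G x - F k x) * g x) \<in> borel_measurable M" for k
      using G_meas F_meas borel_measurable_integrable[OF \<open>integrable M g\<close>] by measurable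
    show "integrable M (\<lambda>x. 2 * B * cmod (g x))" using \<open>integrable M g\<close> by simp
    show "AE x in M. (\<lambda>k. (G x - F k x) * g x) \<longlonglongrightarrow> 0"
      using lim
    proof eventually_elim
      case (elim x)
      then have "(\<lambda>k. (G x - F k x) * g x) \<longlonglongrightarrow> (G x - G x) * g x"
        by (intro tendsto_intros)
      then show ?case by simp
    qed
    show "AE x in M. norm ((G x - F k x) * g x) \<le> 2 * B * cmod (g x)" for k
      using F_bound[of k] G_bound
    proof eventually_elim
      case (elim x)
      then have "cmod (G x - F k x) \<le> 2 * B" using norm_triangle_ineq4[of "G x" "F k x"] by linarith
      then show ?case by (simp add: norm_mult mult_right_mono)
    qed
  qed simp
  then show ?thesis by simp
qed

lemma weak_star_closed_bounded_limit:
  fixes F :: "nat \<Rightarrow> 'a \<Rightarrow> complex"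
  assumes closed: "weak_star_closed M E" and F_in: "\<And>k. F k \<in> E"
    and F_meas: "\<And>k. F k \<in> borel_measurable M"
    and F_bound: "\<And>k. AE x in M. cmod (F k x) \<le> B"
    and lim: "AE x in M. (\<lambda>k. F k x) \<longlonglongrightarrow> G x"
    and G_meas: "G \<in> borel_measurable M" and G_bound: "AE x in M. cmod (G x) \<le> B"
  shows "G \<in> E"
proof -
  note pairing_lim = bounded_AE_tendsto_integral_mult[OF F_meas F_bound lim G_meas G_bound]
  have "\<forall>Gs::('a \<Rightarrow> complex) set. \<forall>\<epsilon>>0. finite Gs \<longrightarrow> (\<forall>g\<in>Gs. integrable M g) \<longrightarrow>
          (\<exists>e\<in>E. \<forall>g\<in>Gs. cmod (\<integral>x. (G x - e x) * g x \<partial>M) < \<epsilon>)"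
  proof (intro allI impI)
    fix Gs :: "('a \<Rightarrow> complex) set" and \<epsilon> :: real
    assume "0 < \<epsilon>" "finite Gs" and Gs_int: "\<forall>g\<in>Gs. integrable M g"
    have "\<forall>g\<in>Gs. \<forall>\<^sub>F k in sequentially. cmod (\<integral>x. (G x - F k x) * g x \<partial>M) < \<epsilon>"
    proof
      fix g assume "g \<in> Gs"
      with Gs_int have "integrable M g" by blast
      from tendstoD[OF pairing_lim[OF this] \<open>0 < \<epsilon>\<close>]
      show "\<forall>\<^sub>F k in sequentially. cmod (\<integral>x. (G x - F k x) * g x \<partial>M) < \<epsilon>"
        by (simp add: dist_norm)
    qed
    then have "\<forall>\<^sub>F k in sequentially. \<forall>g\<in>Gs. cmod (\<integral>x. (G x - F k x) * g x \<partial>M) < \<epsilon>"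
      by (rule eventually_ball_finite[OF \<open>finite Gs\<close>])
    then obtain k where "\<forall>g\<in>Gs. cmod (\<integral>x. (G x - F k x) * g x \<partial>M) < \<epsilon>"
      by (auto simp: eventually_sequentially)
    then show "\<exists>e\<in>E. \<forall>g\<in>Gs. cmod (\<integral>x. (G x - e x) * g x \<partial>M) < \<epsilon>"
      using F_in by blast
  qed
  moreover have "memLinf M G" using G_meas G_bound unfolding memLinf_def by blast
  ultimately show ?thesis using closed unfolding weak_star_closed_def by blast
qed

lemma norm_exp_partial_sum_le:
  fixes z :: complex
  shows "norm (\<Sum>j<n. z ^ j /\<^sub>R fact j) \<le> exp (norm z)"
proof -
  have "norm (\<Sum>j<n. z ^ j /\<^sub>R fact j) \<le> (\<Sum>j<n. norm z ^ j /\<^sub>R fact j)"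
    by (rule order_trans[OF norm_sum]) (simp add: norm_power)
  also have "\<dots> \<le> (\<Sum>j. norm z ^ j /\<^sub>R fact j)"
    by (rule sum_le_suminf[OF sums_summable[OF exp_converges]]) auto
  also have "\<dots> = exp (norm z)"
    using exp_converges[of "norm z"] by (simp add: sums_iff)
  finally show ?thesis .
qed

lemma subalgebra_exp:
  assumes sub: "Linf_subalgebra_with_constants M E"
    and "weak_star_closed M E" and "f \<in> E"
  shows "(\<lambda>x. exp (f x)) \<in> E"
proof -
  have meas: "f \<in> borel_measurable M" by (rule subalgebra_borel_measurable[OF sub \<open>f \<in> E\<close>])
  obtain B where bound: "AE x in M. cmod (f x) \<le> B"
    using subalgebra_AE_bounded[OF sub \<open>f \<in> E\<close>] by blast
  define F where "F n x = (\<Sum>j<n. f x ^ j /\<^sub>R fact j)" for n x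
  show ?thesis
  proof (rule weak_star_closed_bounded_limit[where F=F and B="exp B"])
    show "F k \<in> E" for k
      unfolding F_def scaleR_conv_of_real
      by (intro subalgebra_sum[OF sub] subalgebra_scale[OF sub] subalgebra_power[OF sub \<open>f \<in> E\<close>])
    show "F k \<in> borel_measurable M" for k unfolding F_def using meas by measurable
    show "AE x in M. cmod (F k x) \<le> exp B" for k
      using bound by eventually_elim (unfold F_def, rule order_trans[OF norm_exp_partial_sum_le], simp)
    show "AE x in M. (\<lambda>k. F k x) \<longlonglongrightarrow> exp (f x)"
      unfolding F_def by (intro AE_I2) (rule exp_converges[unfolded sums_def])
    show "AE x in M. cmod (exp (f x)) \<le> exp B"
      using bound by eventually_elim (rule order_trans[OF norm_exp], simp)
  qed (use assms meas in auto)
qed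

lemma powr_mono2_iff:
  fixes x y q :: real
  assumes "0 < q" "0 \<le> x" "0 \<le> y"
  shows "x powr q \<le> y powr q \<longleftrightarrow> x \<le> y"
  using assms by (meson not_le powr_less_mono2 powr_mono2 less_imp_le)

lemma pos_part_diff_powr_le:
  fixes r s m p :: real
  assumes "1 < p" "0 \<le> r" "0 \<le> s" "s \<le> m"
  shows "max 0 (r - s) powr p \<le> r powr p - s * r powr (p - 1) + m powr p"
proof (cases "s \<le> r")
  case True
  have "max 0 (r - s) powr p = (r - s) * (r - s) powr (p - 1)"
    using True powr_mult_base[of "r - s" "p - 1"] by simp
  also have "\<dots> \<le> (r - s) * r powr (p - 1)"
    using True assms by (intro mult_left_mono powr_mono2) auto
  also have "\<dots> = r powr p - s * r powr (p - 1)"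
    using powr_mult_base[of r "p - 1"] assms by (simp add: algebra_simps)
  finally show ?thesis using powr_ge_zero[of m p] by linarith
next
  case False
  have "s * r powr (p - 1) \<le> s * s powr (p - 1)"
    using False assms by (intro mult_left_mono powr_mono2) auto
  also have "\<dots> = s powr p" using powr_mult_base[of s "p - 1"] assms by simp
  also have "\<dots> \<le> m powr p" using assms by (intro powr_mono2) auto
  finally have "s * r powr (p - 1) \<le> m powr p" .
  moreover have "max 0 (r - s) powr p = 0" using False by simp
  ultimately show ?thesis using powr_ge_zero[of r p] by linarith
qed

lemma powr_le_one_plus_powr:
  fixes r p :: real
  assumes "0 \<le> r" "1 \<le> p"
  shows "r powr (p - 1) \<le> 1 + r powr p"
proof (cases "r \<le> 1")
  case True
  then have "r powr (p - 1) \<le> 1 powr (p - 1)" using assms by (intro powr_mono2) auto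
  then have "r powr (p - 1) \<le> 1" by simp
  then show ?thesis using powr_ge_zero[of r p] by linarith
next
  case False
  then have "r powr (p - 1) \<le> r powr p" by (intro powr_mono) auto
  then show ?thesis by simp
qed

lemma norm_one_minus_exp_neg_le:
  fixes z :: complex
  assumes "0 \<le> Re z"
  shows "cmod (1 - exp (- z)) \<le> cmod z"
proof -
  have "cmod (exp 0 - exp (- z)) \<le> 1 * cmod (0 - (- z))"
  proof (rule field_differentiable_bound[OF convex_halfspace_Re_le[of 0]])
    show "(exp has_field_derivative exp w) (at w within {w. Re w \<le> 0})" for w :: complex
      by (rule DERIV_exp[THEN has_field_derivative_at_within])
    show "cmod (exp w) \<le> 1" if "w \<in> {w. Re w \<le> 0}" for w using that by simp
  qed (use assms in auto)
  then show ?thesis by simp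
qed

lemma exp_neg_mult_le_inverse_power:
  fixes y :: real
  assumes "0 < y"
  shows "exp (- (real n * (y - 1))) \<le> 1 / y ^ n"
proof -
  have "y ^ n \<le> exp (y - 1) ^ n"
    using exp_ge_add_one_self[of "y - 1"] assms by (intro power_mono) auto
  also have "\<dots> = exp (real n * (y - 1))" by (simp add: exp_of_nat_mult)
  finally show ?thesis using assms by (simp add: exp_minus inverse_eq_divide frac_le)
qed

lemma
  fixes z :: "nat \<Rightarrow> 'b::banach" and \<rho> p Q :: real
  assumes "0 < \<rho>" "\<rho> < 1" "0 < p" "0 \<le> Q"
    and bound: "\<And>k. norm (z k) powr p \<le> \<rho> ^ k * Q"
  shows summable_norm_of_powr_geometric: "summable (\<lambda>k. norm (z k))"
    and norm_suminf_of_powr_geometric: "norm (suminf z) \<le> Q powr (1/p) / (1 - \<rho> powr (1/p))"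
proof -
  define \<eta> where "\<eta> = \<rho> powr (1/p)"
  have "\<eta> < 1 powr (1/p)" unfolding \<eta>_def using assms by (intro powr_less_mono2) auto
  then have \<eta>: "0 < \<eta>" "\<eta> < 1" unfolding \<eta>_def using assms by auto
  have le: "norm (z k) \<le> \<eta> ^ k * Q powr (1/p)" for k
  proof -
    have "norm (z k) = (norm (z k) powr p) powr (1/p)" using assms by (simp add: powr_powr)
    also have "\<dots> \<le> (\<rho> ^ k * Q) powr (1/p)" using bound assms by (intro powr_mono2) auto
    also have "\<dots> = \<eta> ^ k * Q powr (1/p)"
      unfolding \<eta>_def using assms
      by (simp add: powr_mult powr_realpow[symmetric] powr_powr powr_power mult.commute)
    finally show ?thesis .
  qed
  have geom: "summable (\<lambda>k. \<eta> ^ k * Q powr (1/p))"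
    using \<eta> by (intro summable_mult2 summable_geometric) auto
  show summable: "summable (\<lambda>k. norm (z k))"
    by (rule summable_comparison_test[OF _ geom]) (use le in auto)
  have "norm (suminf z) \<le> (\<Sum>k. norm (z k))" by (rule summable_norm[OF summable])
  also have "\<dots> \<le> (\<Sum>k. \<eta> ^ k * Q powr (1/p))" by (rule suminf_le[OF le summable geom])
  also have "\<dots> = Q powr (1/p) / (1 - \<eta>)"
    using \<eta> by (simp add: suminf_mult2[symmetric] suminf_geometric)
  finally show "norm (suminf z) \<le> Q powr (1/p) / (1 - \<rho> powr (1/p))" unfolding \<eta>_def .
qed

lemma le_Re_limit_of_pos_part_tendsto_zero:
  assumes "S \<longlonglongrightarrow> V" and "(\<lambda>k. max 0 (a - Re (S k))) \<longlonglongrightarrow> 0"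
  shows "a \<le> Re V"
proof -
  have "(\<lambda>k. max 0 (a - Re (S k))) \<longlonglongrightarrow> max 0 (a - Re V)"
    by (intro tendsto_intros assms(1))
  from LIMSEQ_unique[OF this assms(2)] show ?thesis by simp
qed

lemma tendsto_zero_of_powr_summable:
  fixes r :: "nat \<Rightarrow> real"
  assumes "summable (\<lambda>k. r k powr p)" "0 < p" "\<And>k. 0 \<le> r k"
  shows "r \<longlonglongrightarrow> 0"
proof -
  have "(\<lambda>k. (r k powr p) powr (1/p)) \<longlonglongrightarrow> 0"
    by (rule tendsto_zero_powrI[OF summable_LIMSEQ_zero[OF assms(1)] tendsto_const])
      (use assms in auto)
  then show ?thesis using assms(2,3) by (simp add: powr_powr)
qed

lemma Re_suminf_nonneg:
  fixes z :: "nat \<Rightarrow> complex"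
  assumes "summable z" "\<And>k. 0 \<le> Re (z k)"
  shows "0 \<le> Re (suminf z)"
  using Re_suminf[OF assms(1)] summable_Re[OF assms(1)] assms(2) by (simp add: suminf_nonneg)

lemma normLp_le_iff:
  fixes f :: "'a \<Rightarrow> 'b::{banach,second_countable_topology}"
    and g :: "'a \<Rightarrow> 'c::{banach,second_countable_topology}"
  assumes "0 < p" "0 \<le> K"
  shows "normLp M p f \<le> K * normLp M p g \<longleftrightarrow>
    (\<integral>x. norm (f x) powr p \<partial>M) \<le> K powr p * (\<integral>x. norm (g x) powr p \<partial>M)"
proof -
  define a where "a = (\<integral>x. norm (f x) powr p \<partial>M)"
  define b where "b = (\<integral>x. norm (g x) powr p \<partial>M)"
  have "0 \<le> a" "0 \<le> b" unfolding a_def b_def by (auto intro: integral_nonneg_AE)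
  then have "K * b powr (1/p) = (K powr p * b) powr (1/p)"
    using assms by (simp add: powr_mult powr_powr)
  then have "normLp M p f \<le> K * normLp M p g \<longleftrightarrow> a powr (1/p) \<le> (K powr p * b) powr (1/p)"
    unfolding normLp_def a_def b_def by simp
  also have "\<dots> \<longleftrightarrow> a \<le> K powr p * b"
    using \<open>0 \<le> a\<close> \<open>0 \<le> b\<close> assms by (intro powr_mono2_iff) auto
  finally show ?thesis unfolding a_def b_def .
qed

lemma memLinf_integrable_powr:
  assumes "finite_measure M" "memLinf M f" "0 < p"
  shows "integrable M (\<lambda>x. cmod (f x) powr p)"
proof -
  interpret finite_measure M by fact
  obtain B where meas: "f \<in> borel_measurable M" and bound: "AE x in M. cmod (f x) \<le> B"
    using assms(2) unfolding memLinf_def by blast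
  show ?thesis
  proof (rule integrable_const_bound[where B="B powr p"])
    show "AE x in M. norm (cmod (f x) powr p) \<le> B powr p"
      using bound by eventually_elim (use assms(3) in \<open>auto intro: powr_mono2\<close>)
  qed (use meas in measurable)
qed

lemma memLp_of_norm_le:
  fixes f :: "'a \<Rightarrow> 'b::{banach,second_countable_topology}"
    and g :: "'a \<Rightarrow> 'c::{banach,second_countable_topology}"
  assumes "memLp M p f" "g \<in> borel_measurable M" "\<And>x. norm (g x) \<le> norm (f x)" "0 < p"
  shows "memLp M p g"
  unfolding memLp_def
proof
  show "integrable M (\<lambda>x. norm (g x) powr p)"
  proof (rule Bochner_Integration.integrable_bound)
    show "integrable M (\<lambda>x. norm (f x) powr p)" using assms(1) unfolding memLp_def by simp
    show "AE x in M. norm (norm (g x) powr p) \<le> norm (norm (f x) powr p)"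
      using assms(3,4) by (intro AE_I2) (auto intro: powr_mono2)
  qed (use assms(2) in measurable)
qed (rule assms(2))

lemma integrable_pos_part_diff_powr:
  fixes r s :: "'a \<Rightarrow> real"
  assumes "integrable M (\<lambda>x. r x powr p)" "r \<in> borel_measurable M" "s \<in> borel_measurable M"
    and "\<And>x. 0 \<le> r x" "AE x in M. 0 \<le> s x" "0 < p"
  shows "integrable M (\<lambda>x. max 0 (r x - s x) powr p)"
proof (rule Bochner_Integration.integrable_bound[OF assms(1)])
  show "AE x in M. norm (max 0 (r x - s x) powr p) \<le> norm (r x powr p)"
    using assms(5) by eventually_elim (use assms(4,6) in \<open>auto intro: powr_mono2\<close>)
qed (use assms(2,3) in measurable)

lemma
  fixes q :: "nat \<Rightarrow> 'a \<Rightarrow> real"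
  assumes int: "\<And>k. integrable M (q k)" and nonneg: "\<And>k x. 0 \<le> q k x"
    and bound: "\<And>k. (\<integral>x. q k x \<partial>M) \<le> c * \<rho> ^ k" and "0 \<le> \<rho>" "\<rho> < 1"
  shows AE_summable_of_integral_geometric: "AE x in M. summable (\<lambda>k. q k x)"
    and integrable_suminf_of_integral_geometric: "integrable M (\<lambda>x. \<Sum>k. q k x)"
    and integral_suminf_le_of_integral_geometric: "(\<integral>x. (\<Sum>k. q k x) \<partial>M) \<le> c / (1 - \<rho>)"
proof -
  have meas: "q k \<in> borel_measurable M" for k using int by auto
  have geom: "summable (\<lambda>k. c * \<rho> ^ k)" using assms by (intro summable_mult summable_geometric) auto
  have summable_int: "summable (\<lambda>k. \<integral>x. q k x \<partial>M)"
    by (rule summable_comparison_test[OF _ geom])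
      (use bound nonneg in \<open>auto intro!: exI[of _ 0] integral_nonneg_AE\<close>)
  have "(\<integral>\<^sup>+ x. (\<Sum>k. ennreal (q k x)) \<partial>M) = (\<Sum>k. \<integral>\<^sup>+ x. ennreal (q k x) \<partial>M)"
    using meas by (intro nn_integral_suminf) auto
  also have "\<dots> = (\<Sum>k. ennreal (\<integral>x. q k x \<partial>M))"
    using int nonneg by (intro arg_cong[where f=suminf] ext nn_integral_eq_integral) auto
  also have "\<dots> = ennreal (\<Sum>k. \<integral>x. q k x \<partial>M)"
    using summable_int nonneg by (intro suminf_ennreal2) (auto intro: integral_nonneg_AE)
  finally have "AE x in M. (\<Sum>k. ennreal (q k x)) \<noteq> \<infinity>"
    using meas by (intro nn_integral_noteq_infinite) auto
  then show AE: "AE x in M. summable (\<lambda>k. q k x)"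
    by eventually_elim (rule summable_suminf_not_top, use nonneg in auto)
  have norm_q: "norm (q k x) = q k x" for k x using nonneg[of k x] by simp
  show "integrable M (\<lambda>x. \<Sum>k. q k x)"
    using integrable_suminf[of M q] int AE summable_int unfolding norm_q by auto
  have "(\<integral>x. (\<Sum>k. q k x) \<partial>M) = (\<Sum>k. \<integral>x. q k x \<partial>M)"
    using integral_suminf[of M q] int AE summable_int unfolding norm_q by auto
  also have "\<dots> \<le> (\<Sum>k. c * \<rho> ^ k)" by (rule suminf_le[OF bound summable_int geom])
  also have "\<dots> = c / (1 - \<rho>)" using assms by (simp add: suminf_mult suminf_geometric)
  finally show "(\<integral>x. (\<Sum>k. q k x) \<partial>M) \<le> c / (1 - \<rho>)" .
qed

section \<open>The approximation step\<close>

definition positive_approximant ::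
    "'a measure \<Rightarrow> real \<Rightarrow> ('a \<Rightarrow> complex) set \<Rightarrow> real \<Rightarrow> real \<Rightarrow> ('a \<Rightarrow> real) \<Rightarrow> ('a \<Rightarrow> complex) \<Rightarrow> bool"
  where
  "positive_approximant M p E \<theta> A r v \<longleftrightarrow> v \<in> E \<and> (AE x in M. 0 \<le> Re (v x)) \<and>
     (\<integral>x. cmod (v x) powr p \<partial>M) \<le> A * (\<integral>x. r x powr p \<partial>M) \<and>
     (\<integral>x. max 0 (r x - Re (v x)) powr p \<partial>M) \<le> \<theta> * (\<integral>x. r x powr p \<partial>M)"

definition approximation_step :: "'a measure \<Rightarrow> real \<Rightarrow> ('a \<Rightarrow> complex) set \<Rightarrow> real \<Rightarrow> real \<Rightarrow> bool"
  where
  "approximation_step M p E \<theta> A \<longleftrightarrow>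
     (\<forall>r. memLp M p r \<and> (\<forall>x. 0 \<le> r x) \<longrightarrow> (\<exists>v. positive_approximant M p E \<theta> A r v))"

text \<open>With this step size t^(p-1) (|C0|+1)^p = 1/4, so the cost t^p \<integral> |w|^p \<le> t R/4 of
  subtracting t Re w from r is at most half the gain t \<integral> Re w r^(p-1) > t R/2, where R = \<integral> r^p.\<close>
definition alpha_step_size :: "real \<Rightarrow> real \<Rightarrow> real" where
  "alpha_step_size C0 p = (1 / (4 * (\<bar>C0\<bar> + 1) powr p)) powr (1 / (p - 1))"

lemma
  assumes "1 < p"
  shows alpha_step_size_pos: "0 < alpha_step_size C0 p"
    and alpha_step_size_le_one: "alpha_step_size C0 p \<le> 1"
    and alpha_step_size_powr:
      "alpha_step_size C0 p powr p = alpha_step_size C0 p / (4 * (\<bar>C0\<bar> + 1) powr p)"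
proof -
  define t where "t = alpha_step_size C0 p"
  have K: "1 \<le> (\<bar>C0\<bar> + 1) powr p" using assms by (intro ge_one_powr_ge_zero) auto
  then show t_pos: "0 < alpha_step_size C0 p" unfolding alpha_step_size_def by simp
  have "alpha_step_size C0 p \<le> 1 powr (1 / (p - 1))"
    unfolding alpha_step_size_def using K assms by (intro powr_mono2) auto
  then show "alpha_step_size C0 p \<le> 1" by simp
  have "t powr (p - 1) = 1 / (4 * (\<bar>C0\<bar> + 1) powr p)"
    unfolding t_def alpha_step_size_def using assms K by (simp add: powr_powr)
  moreover have "t powr p = t * t powr (p - 1)"
    using powr_mult_base[of t "p - 1"] t_pos unfolding t_def by simp
  ultimately show "alpha_step_size C0 p powr p = alpha_step_size C0 p / (4 * (\<bar>C0\<bar> + 1) powr p)"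
    unfolding t_def by simp
qed

lemma integrable_Re_mult_powr:
  assumes "finite_measure M" "memLinf M w" "integrable M (\<lambda>x. r x powr p)"
    and "r \<in> borel_measurable M" "\<And>x. 0 \<le> r x" "1 \<le> p"
  shows "integrable M (\<lambda>x. Re (w x) * r x powr (p - 1))"
proof -
  obtain B where w_meas: "w \<in> borel_measurable M" and w_bound: "AE x in M. cmod (w x) \<le> B"
    using assms(2) unfolding memLinf_def by blast
  show ?thesis
  proof (rule Bochner_Integration.integrable_bound[where f="\<lambda>x. \<bar>B\<bar> * (1 + r x powr p)"])
    show "integrable M (\<lambda>x. \<bar>B\<bar> * (1 + r x powr p))"
      by (intro integrable_mult_right Bochner_Integration.integrable_add
          finite_measure.integrable_const[OF assms(1)] assms(3))
    show "AE x in M. norm (Re (w x) * r x powr (p - 1)) \<le> norm (\<bar>B\<bar> * (1 + r x powr p))"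
      using w_bound
    proof eventually_elim
      case (elim x)
      have "\<bar>Re (w x)\<bar> \<le> \<bar>B\<bar>" using elim abs_Re_le_cmod[of "w x"] by linarith
      moreover have "r x powr (p - 1) \<le> 1 + r x powr p"
        using powr_le_one_plus_powr assms(5,6) by blast
      ultimately show ?case by (simp add: abs_mult mult_mono)
    qed
  qed (use w_meas assms(4) in measurable)
qed

text \<open>The test function is r^(p-1), which lies in L^(p/(p-1)) and pairs with r to \<integral> r^p.\<close>
lemma condition_alpha_large_pairing:
  assumes "1 < p" "condition_alpha M p C0 E"
    and r: "memLp M p r" "\<And>x. 0 \<le> r x" "0 < (\<integral>x. r x powr p \<partial>M)"
  shows "\<exists>w\<in>E. (AE x in M. 0 \<le> Re (w x)) \<and>
    (\<integral>x. r x powr p \<partial>M) / 2 < (\<integral>x. Re (w x) * r x powr (p - 1) \<partial>M) \<and>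
    (\<integral>x. cmod (w x) powr p \<partial>M) \<le> (\<bar>C0\<bar> + 1) powr p * (\<integral>x. r x powr p \<partial>M)"
proof -
  define R where "R = (\<integral>x. r x powr p \<partial>M)"
  obtain w where w_in: "\<forall>n. w n \<in> E" and w_Re: "\<forall>n. AE x in M. 0 \<le> Re (w n x)"
    and w_weak: "weak_conv_Lp M p (\<lambda>n x. Re (w n x)) r"
    and w_norm: "\<forall>n. normLp M p (w n) \<le> C0 * normLp M p r"
    using assms(2) r(1,2) unfolding condition_alpha_def by blast
  have r_meas: "r \<in> borel_measurable M" and r_int: "integrable M (\<lambda>x. r x powr p)"
    using r(1,2) unfolding memLp_def by auto
  have "norm (r x powr (p - 1)) powr (p / (p - 1)) = r x powr p" for x
    using assms(1) r(2)[of x] by (simp add: powr_powr)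
  then have "memLp M (p / (p - 1)) (\<lambda>x. r x powr (p - 1))"
    unfolding memLp_def using r_meas r_int by simp
  then have "(\<lambda>n. \<integral>x. Re (w n x) * r x powr (p - 1) \<partial>M) \<longlonglongrightarrow> (\<integral>x. r x * r x powr (p - 1) \<partial>M)"
    using w_weak unfolding weak_conv_Lp_def by blast
  moreover have "r x * r x powr (p - 1) = r x powr p" for x
    using powr_mult_base[OF r(2)[of x], of "p - 1"] by simp
  ultimately have "(\<lambda>n. \<integral>x. Re (w n x) * r x powr (p - 1) \<partial>M) \<longlonglongrightarrow> R"
    unfolding R_def by simp
  from order_tendstoD(1)[OF this, of "R / 2"] r(3)
  obtain n where n: "R / 2 < (\<integral>x. Re (w n x) * r x powr (p - 1) \<partial>M)"
    unfolding R_def by (auto simp: eventually_sequentially)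
  have "0 \<le> normLp M p r" unfolding normLp_def by simp
  then have "C0 * normLp M p r \<le> (\<bar>C0\<bar> + 1) * normLp M p r" by (intro mult_right_mono) auto
  then have "normLp M p (w n) \<le> (\<bar>C0\<bar> + 1) * normLp M p r"
    using w_norm order_trans by blast
  then have "(\<integral>x. cmod (w n x) powr p \<partial>M) \<le> (\<bar>C0\<bar> + 1) powr p * R"
    using normLp_le_iff[of p "\<bar>C0\<bar> + 1" M "w n" r] assms(1) r(2) unfolding R_def by simp
  then show ?thesis using w_in w_Re n unfolding R_def by blast
qed

lemma scaled_positive_approximant:
  assumes fm: "finite_measure M" and sub: "Linf_subalgebra_with_constants M E" and p: "1 < p"
    and r: "memLp M p r" "\<And>x. 0 \<le> r x"
    and w_in: "w \<in> E" and w_Re: "AE x in M. 0 \<le> Re (w x)"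
    and pairing: "(\<integral>x. r x powr p \<partial>M) / 2 < (\<integral>x. Re (w x) * r x powr (p - 1) \<partial>M)"
    and cost: "(\<integral>x. cmod (w x) powr p \<partial>M) \<le> K powr p * (\<integral>x. r x powr p \<partial>M)"
    and "0 < K" "0 < t" and t_powr: "t powr p = t / (4 * K powr p)"
  shows "positive_approximant M p E (1 - t / 4) ((t * K) powr p) r (\<lambda>x. t * w x)"
proof -
  define R where "R = (\<integral>x. r x powr p \<partial>M)"
  have r_meas: "r \<in> borel_measurable M" and r_int: "integrable M (\<lambda>x. r x powr p)"
    using r unfolding memLp_def by auto
  have w_meas: "w \<in> borel_measurable M" by (rule subalgebra_borel_measurable[OF sub w_in])
  have w_int: "integrable M (\<lambda>x. cmod (w x) powr p)"
    using memLinf_integrable_powr[OF fm subalgebra_memLinf[OF sub w_in]] p by simp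
  have pairing_int: "integrable M (\<lambda>x. Re (w x) * r x powr (p - 1))"
    using integrable_Re_mult_powr[OF fm subalgebra_memLinf[OF sub w_in] r_int r_meas r(2)] p by simp
  have "(\<integral>x. cmod (t * w x) powr p \<partial>M) = t powr p * (\<integral>x. cmod (w x) powr p \<partial>M)"
    using \<open>0 < t\<close> by (simp add: norm_mult powr_mult)
  also have "\<dots> \<le> (t * K) powr p * R"
    using mult_left_mono[OF cost, of "t powr p"] by (simp add: powr_mult R_def)
  finally have v_cost: "(\<integral>x. cmod (t * w x) powr p \<partial>M) \<le> (t * K) powr p * R" .
  have pointwise: "AE x in M. max 0 (r x - Re (t * w x)) powr p \<le>
      r x powr p - t * (Re (w x) * r x powr (p - 1)) + t powr p * cmod (w x) powr p"
    using w_Re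
  proof eventually_elim
    case (elim x)
    have "max 0 (r x - t * Re (w x)) powr p \<le>
        r x powr p - t * Re (w x) * r x powr (p - 1) + (t * cmod (w x)) powr p"
      using \<open>0 < t\<close> elim complex_Re_le_cmod[of "w x"]
      by (intro pos_part_diff_powr_le[OF p r(2)]) (auto intro: mult_left_mono)
    then show ?case using \<open>0 < t\<close> by (simp add: powr_mult mult.assoc)
  qed
  have "(\<integral>x. max 0 (r x - Re (t * w x)) powr p \<partial>M) \<le>
      (\<integral>x. r x powr p - t * (Re (w x) * r x powr (p - 1)) + t powr p * cmod (w x) powr p \<partial>M)"
  proof (rule integral_mono_AE[OF _ _ pointwise])
    show "integrable M (\<lambda>x. max 0 (r x - Re (t * w x)) powr p)"
      using w_Re \<open>0 < t\<close> p
      by (intro integrable_pos_part_diff_powr[OF r_int r_meas _ r(2)])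
        (use w_meas in \<open>auto elim: eventually_mono\<close>)
  qed (use r_int pairing_int w_int in simp)
  also have "\<dots> = R - t * (\<integral>x. Re (w x) * r x powr (p - 1) \<partial>M) + t powr p * (\<integral>x. cmod (w x) powr p \<partial>M)"
    unfolding R_def using r_int pairing_int w_int by simp
  also have "\<dots> \<le> R - t * (R / 2) + t powr p * (K powr p * R)"
    using pairing cost \<open>0 < t\<close> unfolding R_def by (intro add_mono diff_left_mono mult_left_mono) auto
  also have "\<dots> = (1 - t / 4) * R" using t_powr \<open>0 < K\<close> by (simp add: field_simps)
  finally have "(\<integral>x. max 0 (r x - Re (t * w x)) powr p \<partial>M) \<le> (1 - t / 4) * R" .
  moreover have "AE x in M. 0 \<le> Re (t * w x)" using w_Re \<open>0 < t\<close> by (auto elim: eventually_mono)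
  moreover have "(\<lambda>x. t * w x) \<in> E" by (rule subalgebra_scale[OF sub w_in])
  ultimately show ?thesis using v_cost unfolding positive_approximant_def R_def by blast
qed

lemma condition_alpha_approximation_step:
  assumes fm: "finite_measure M" and sub: "Linf_subalgebra_with_constants M E"
    and p: "1 < p" and alpha: "condition_alpha M p C0 E"
  shows "approximation_step M p E (1 - alpha_step_size C0 p / 4)
    ((alpha_step_size C0 p * (\<bar>C0\<bar> + 1)) powr p)"
  unfolding approximation_step_def
proof (intro allI impI)
  fix r :: "'a \<Rightarrow> real"
  assume "memLp M p r \<and> (\<forall>x. 0 \<le> r x)"
  then have r: "memLp M p r" "\<And>x. 0 \<le> r x" by auto
  define t where "t = alpha_step_size C0 p"
  have "0 \<le> (\<integral>x. r x powr p \<partial>M)" by (auto intro: integral_nonneg_AE)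
  then consider "(\<integral>x. r x powr p \<partial>M) = 0" | "0 < (\<integral>x. r x powr p \<partial>M)" by linarith
  then show "\<exists>v. positive_approximant M p E (1 - t / 4) ((t * (\<bar>C0\<bar> + 1)) powr p) r v"
  proof cases
    case 1
    then show ?thesis unfolding positive_approximant_def
      using subalgebra_const[OF sub, of 0] r(2) p by (intro exI[of _ "\<lambda>x. 0"]) simp
  next
    case 2
    then obtain w where w: "w \<in> E" "AE x in M. 0 \<le> Re (w x)"
      "(\<integral>x. r x powr p \<partial>M) / 2 < (\<integral>x. Re (w x) * r x powr (p - 1) \<partial>M)"
      "(\<integral>x. cmod (w x) powr p \<partial>M) \<le> (\<bar>C0\<bar> + 1) powr p * (\<integral>x. r x powr p \<partial>M)"
      using condition_alpha_large_pairing[OF p alpha r] by blast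
    have "positive_approximant M p E (1 - t / 4) ((t * (\<bar>C0\<bar> + 1)) powr p) r (\<lambda>x. t * w x)"
      using alpha_step_size_pos[OF p, of C0] alpha_step_size_powr[OF p, of C0] unfolding t_def
      by (intro scaled_positive_approximant[OF fm sub p r w]) auto
    then show ?thesis by blast
  qed
qed

section \<open>Greedy iteration\<close>

primrec greedy_sum ::
    "(('a \<Rightarrow> real) \<Rightarrow> 'a \<Rightarrow> complex) \<Rightarrow> ('a \<Rightarrow> real) \<Rightarrow> nat \<Rightarrow> 'a \<Rightarrow> complex" where
  "greedy_sum f u 0 = (\<lambda>x. 0)"
| "greedy_sum f u (Suc k) =
     (\<lambda>x. greedy_sum f u k x + f (\<lambda>y. max 0 (u y - Re (greedy_sum f u k y))) x)"

definition greedy_residual ::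
    "(('a \<Rightarrow> real) \<Rightarrow> 'a \<Rightarrow> complex) \<Rightarrow> ('a \<Rightarrow> real) \<Rightarrow> nat \<Rightarrow> 'a \<Rightarrow> real" where
  "greedy_residual f u k y = max 0 (u y - Re (greedy_sum f u k y))"

lemma greedy_sum_Suc':
  "greedy_sum f u (Suc k) x = greedy_sum f u k x + f (greedy_residual f u k) x"
  by (simp add: greedy_residual_def[abs_def])

declare greedy_sum.simps(2) [simp del]

lemma greedy_sum_eq_sum: "greedy_sum f u k x = (\<Sum>j<k. f (greedy_residual f u j) x)"
  by (induction k) (simp_all add: greedy_sum_Suc')

lemma greedy_residual_nonneg: "0 \<le> greedy_residual f u k x"
  by (simp add: greedy_residual_def)

lemma greedy_residual_Suc_le:
  "greedy_residual f u (Suc k) x \<le> max 0 (greedy_residual f u k x - Re (f (greedy_residual f u k) x))"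
  unfolding greedy_residual_def[of f u "Suc k"] greedy_sum_Suc'
  by (auto simp: greedy_residual_def)

lemma greedy_step:
  assumes sub: "Linf_subalgebra_with_constants M E" and p: "1 < p"
    and f: "\<forall>r. memLp M p r \<and> (\<forall>x. 0 \<le> r x) \<longrightarrow> positive_approximant M p E \<theta> A r (f r)"
    and u: "memLp M p u" "\<And>x. 0 \<le> u x"
    and S_in: "greedy_sum f u k \<in> E" and S_Re: "AE x in M. 0 \<le> Re (greedy_sum f u k x)"
    and r: "memLp M p (greedy_residual f u k)"
  shows "greedy_sum f u (Suc k) \<in> E" and "AE x in M. 0 \<le> Re (greedy_sum f u (Suc k) x)"
    and "memLp M p (greedy_residual f u (Suc k))"
    and "(\<integral>x. greedy_residual f u (Suc k) x powr p \<partial>M) \<le> \<theta> * (\<integral>x. greedy_residual f u k x powr p \<partial>M)"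
proof -
  define r where "r = greedy_residual f u k"
  define v where "v = f r"
  have "positive_approximant M p E \<theta> A r v"
    unfolding v_def using f r by (simp add: greedy_residual_nonneg r_def)
  then have v: "v \<in> E" "AE x in M. 0 \<le> Re (v x)"
    "(\<integral>x. max 0 (r x - Re (v x)) powr p \<partial>M) \<le> \<theta> * (\<integral>x. r x powr p \<partial>M)"
    unfolding positive_approximant_def by auto
  have S_eq: "greedy_sum f u (Suc k) = (\<lambda>x. greedy_sum f u k x + v x)"
    unfolding v_def r_def by (simp add: greedy_sum_Suc' fun_eq_iff)
  show S'_in: "greedy_sum f u (Suc k) \<in> E" unfolding S_eq using S_in v(1) by (rule subalgebra_add[OF sub])
  show S'_Re: "AE x in M. 0 \<le> Re (greedy_sum f u (Suc k) x)"
    using S_Re v(2) unfolding S_eq by (auto elim: eventually_mono)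
  have u_meas: "u \<in> borel_measurable M" and u_int: "integrable M (\<lambda>x. u x powr p)"
    using u unfolding memLp_def by auto
  have S'_meas: "greedy_sum f u (Suc k) \<in> borel_measurable M"
    by (rule subalgebra_borel_measurable[OF sub S'_in])
  have res_eq: "greedy_residual f u (Suc k) = (\<lambda>x. max 0 (u x - Re (greedy_sum f u (Suc k) x)))"
    by (simp add: greedy_residual_def[abs_def])
  have "integrable M (\<lambda>x. max 0 (u x - Re (greedy_sum f u (Suc k) x)) powr p)"
    using S'_Re p S'_meas by (intro integrable_pos_part_diff_powr[OF u_int u_meas _ u(2)]) auto
  moreover have "(\<lambda>x. max 0 (u x - Re (greedy_sum f u (Suc k) x))) \<in> borel_measurable M"
    using u_meas S'_meas by measurable
  ultimately show "memLp M p (greedy_residual f u (Suc k))"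
    unfolding memLp_def res_eq by simp
  then have "(\<integral>x. greedy_residual f u (Suc k) x powr p \<partial>M) \<le> (\<integral>x. max 0 (r x - Re (v x)) powr p \<partial>M)"
    using r v(2) p subalgebra_borel_measurable[OF sub v(1)] greedy_residual_Suc_le[of f u k]
    unfolding memLp_def r_def v_def
    by (intro integral_mono integrable_pos_part_diff_powr powr_mono2)
      (auto simp: greedy_residual_nonneg)
  with v(3) show "(\<integral>x. greedy_residual f u (Suc k) x powr p \<partial>M) \<le> \<theta> * (\<integral>x. greedy_residual f u k x powr p \<partial>M)"
    unfolding r_def by linarith
qed

lemma greedy_invariant:
  assumes sub: "Linf_subalgebra_with_constants M E" and p: "1 < p" and "0 \<le> \<theta>"
    and f: "\<forall>r. memLp M p r \<and> (\<forall>x. 0 \<le> r x) \<longrightarrow> positive_approximant M p E \<theta> A r (f r)"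
    and u: "memLp M p u" "\<And>x. 0 \<le> u x"
  shows "greedy_sum f u k \<in> E \<and> (AE x in M. 0 \<le> Re (greedy_sum f u k x)) \<and>
    memLp M p (greedy_residual f u k) \<and>
    (\<integral>x. greedy_residual f u k x powr p \<partial>M) \<le> \<theta> ^ k * (\<integral>x. u x powr p \<partial>M)"
proof (induction k)
  case 0
  have "greedy_residual f u 0 = u" using u(2) by (simp add: greedy_residual_def[abs_def] max_absorb2)
  then show ?case using u(1) subalgebra_const[OF sub] by simp
next
  case (Suc k)
  then have IH: "greedy_sum f u k \<in> E" "AE x in M. 0 \<le> Re (greedy_sum f u k x)"
    "memLp M p (greedy_residual f u k)"
    "(\<integral>x. greedy_residual f u k x powr p \<partial>M) \<le> \<theta> ^ k * (\<integral>x. u x powr p \<partial>M)" by auto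
  note step = greedy_step[OF sub p f u IH(1-3)]
  have "\<theta> * (\<integral>x. greedy_residual f u k x powr p \<partial>M) \<le> \<theta> * (\<theta> ^ k * (\<integral>x. u x powr p \<partial>M))"
    using IH(4) \<open>0 \<le> \<theta>\<close> by (rule mult_left_mono)
  then show ?case using step by simp
qed

lemma greedy_increment_bounds:
  assumes "Linf_subalgebra_with_constants M E" "1 < p" "0 \<le> \<theta>" "0 \<le> A"
    and f: "\<forall>r. memLp M p r \<and> (\<forall>x. 0 \<le> r x) \<longrightarrow> positive_approximant M p E \<theta> A r (f r)"
    and u: "memLp M p u" "\<And>x. 0 \<le> u x"
  shows "f (greedy_residual f u k) \<in> E" and "AE x in M. 0 \<le> Re (f (greedy_residual f u k) x)"
    and "(\<integral>x. cmod (f (greedy_residual f u k) x) powr p \<partial>M) \<le> A * (\<theta> ^ k * (\<integral>x. u x powr p \<partial>M))"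
proof -
  note invariant = greedy_invariant[OF assms(1-3) f u, of k]
  then have "positive_approximant M p E \<theta> A (greedy_residual f u k) (f (greedy_residual f u k))"
    using f by (simp add: greedy_residual_nonneg)
  then show "f (greedy_residual f u k) \<in> E" "AE x in M. 0 \<le> Re (f (greedy_residual f u k) x)"
    and "(\<integral>x. cmod (f (greedy_residual f u k) x) powr p \<partial>M) \<le> A * (\<theta> ^ k * (\<integral>x. u x powr p \<partial>M))"
    using invariant \<open>0 \<le> A\<close> unfolding positive_approximant_def
    by (auto intro: order_trans mult_left_mono)
qed

lemma greedy_residual_AE_tendsto_zero:
  assumes "Linf_subalgebra_with_constants M E" "1 < p" "0 \<le> \<theta>" "\<theta> < 1"
    and f: "\<forall>r. memLp M p r \<and> (\<forall>x. 0 \<le> r x) \<longrightarrow> positive_approximant M p E \<theta> A r (f r)"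
    and u: "memLp M p u" "\<And>x. 0 \<le> u x"
  shows "AE x in M. (\<lambda>k. greedy_residual f u k x) \<longlonglongrightarrow> 0"
proof -
  note invariant = greedy_invariant[OF assms(1-3) f u]
  have "AE x in M. summable (\<lambda>k. greedy_residual f u k x powr p)"
    using invariant assms(3,4) unfolding memLp_def
    by (intro AE_summable_of_integral_geometric[where c="\<integral>x. u x powr p \<partial>M"])
      (auto simp: mult.commute abs_of_nonneg greedy_residual_nonneg)
  then show ?thesis
    by eventually_elim (rule tendsto_zero_of_powr_summable, use assms(2) greedy_residual_nonneg in auto)
qed

section \<open>The exponential of the greedy series\<close>

lemma exp_neg_series_bounds:
  fixes z :: "nat \<Rightarrow> complex"
  assumes \<rho>: "0 < \<rho>" "\<rho> < 1" and "0 < p" "0 \<le> g"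
    and Re_nonneg: "\<And>k. 0 \<le> Re (z k)"
    and summable: "summable (\<lambda>k. cmod (z k) powr p / \<rho> ^ k)"
    and residual: "(\<lambda>k. max 0 (a - Re (\<Sum>j<k. z j))) \<longlonglongrightarrow> 0"
  shows "summable z"
    and "cmod (exp (- (g * suminf z))) \<le> exp (- g * a)"
    and "cmod (1 - exp (- (g * suminf z))) powr p \<le>
      (g / (1 - \<rho> powr (1/p))) powr p * (\<Sum>k. cmod (z k) powr p / \<rho> ^ k)"
proof -
  define Q where "Q = (\<Sum>k. cmod (z k) powr p / \<rho> ^ k)"
  have "0 \<le> Q" unfolding Q_def using \<rho> by (intro suminf_nonneg[OF summable]) auto
  have "cmod (z k) powr p / \<rho> ^ k \<le> Q" for k
    unfolding Q_def using sum_le_suminf[OF summable, of "{k}"] \<rho> by simp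
  then have bound: "cmod (z k) powr p \<le> \<rho> ^ k * Q" for k
    using \<rho> by (simp add: pos_divide_le_eq mult.commute)
  show "summable z"
    using summable_norm_of_powr_geometric[OF \<rho> \<open>0 < p\<close> \<open>0 \<le> Q\<close> bound] by (rule summable_norm_cancel)
  have "a \<le> Re (suminf z)"
    by (rule le_Re_limit_of_pos_part_tendsto_zero[OF summable_LIMSEQ[OF \<open>summable z\<close>] residual])
  then show "cmod (exp (- (g * suminf z))) \<le> exp (- g * a)"
    using \<open>0 \<le> g\<close> by (simp add: mult_left_mono)
  have "0 \<le> Re (suminf z)" by (rule Re_suminf_nonneg[OF \<open>summable z\<close> Re_nonneg])
  then have "cmod (1 - exp (- (g * suminf z))) \<le> cmod (g * suminf z)"
    using \<open>0 \<le> g\<close> by (intro norm_one_minus_exp_neg_le) simp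
  also have "\<dots> = g * cmod (suminf z)" using \<open>0 \<le> g\<close> by (simp add: norm_mult)
  also have "\<dots> \<le> g * (Q powr (1/p) / (1 - \<rho> powr (1/p)))"
    by (rule mult_left_mono[OF norm_suminf_of_powr_geometric[OF \<rho> \<open>0 < p\<close> \<open>0 \<le> Q\<close> bound] \<open>0 \<le> g\<close>])
  also have "\<dots> = g / (1 - \<rho> powr (1/p)) * Q powr (1/p)" by simp
  finally have "cmod (1 - exp (- (g * suminf z))) powr p \<le> (g / (1 - \<rho> powr (1/p)) * Q powr (1/p)) powr p"
    using \<open>0 < p\<close> by (intro powr_mono2) auto
  also have "\<dots> = (g / (1 - \<rho> powr (1/p))) powr p * (Q powr (1/p)) powr p"
    by (rule powr_mult)
  also have "(Q powr (1/p)) powr p = Q" using \<open>0 \<le> Q\<close> \<open>0 < p\<close> by (simp add: powr_powr)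
  finally show "cmod (1 - exp (- (g * suminf z))) powr p \<le>
      (g / (1 - \<rho> powr (1/p))) powr p * (\<Sum>k. cmod (z k) powr p / \<rho> ^ k)"
    unfolding Q_def .
qed

lemma subalgebra_exp_neg_series:
  fixes v :: "nat \<Rightarrow> 'a \<Rightarrow> complex" and g :: real
  assumes sub: "Linf_subalgebra_with_constants M E" and closed: "weak_star_closed M E"
    and v_in: "\<And>k. v k \<in> E" and v_Re: "\<And>k. AE x in M. 0 \<le> Re (v k x)"
    and summable: "AE x in M. summable (\<lambda>k. v k x)" and "0 \<le> g"
  shows "(\<lambda>x. exp (- (g * (\<Sum>k. v k x)))) \<in> E"
proof (rule weak_star_closed_bounded_limit[OF closed, where B=1])
  define S where "S k x = (\<Sum>j<k. v j x)" for k x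
  have S_in: "S k \<in> E" for k
    unfolding S_def[abs_def] by (rule subalgebra_sum[OF sub v_in])
  have v_Re_all: "AE x in M. \<forall>k. 0 \<le> Re (v k x)" using v_Re by (simp add: AE_all_countable)
  show "(\<lambda>x. exp (- (g * S k x))) \<in> E" for k
    using subalgebra_exp[OF sub closed subalgebra_scale[OF sub S_in, of "- g"]] by simp
  show "(\<lambda>x. exp (- (g * S k x))) \<in> borel_measurable M" for k
    using subalgebra_borel_measurable[OF sub S_in] by measurable
  show "AE x in M. cmod (exp (- (g * S k x))) \<le> 1" for k
    using v_Re_all by eventually_elim (use \<open>0 \<le> g\<close> in \<open>simp add: S_def Re_sum sum_nonneg\<close>)
  show "AE x in M. (\<lambda>k. exp (- (g * S k x))) \<longlonglongrightarrow> exp (- (g * (\<Sum>k. v k x)))"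
    using summable by eventually_elim (unfold S_def, intro tendsto_intros summable_LIMSEQ)
  show "(\<lambda>x. exp (- (g * (\<Sum>k. v k x)))) \<in> borel_measurable M"
    using subalgebra_borel_measurable[OF sub v_in] by measurable
  show "AE x in M. cmod (exp (- (g * (\<Sum>k. v k x)))) \<le> 1"
    using summable v_Re_all
    by eventually_elim (use \<open>0 \<le> g\<close> in \<open>simp add: Re_suminf_nonneg\<close>)
qed

text \<open>Weighting |v_k|^p by \<rho>^(-k) keeps the series of integrals summable, while pointwise it
  forces |v_k| \<le> \<rho>^(k/p) Q^(1/p); this controls \<Sum> v_k in L^p without Minkowski's inequality.\<close>
lemma exp_neg_series_approximation:
  fixes v :: "nat \<Rightarrow> 'a \<Rightarrow> complex" and g :: real
  assumes fm: "finite_measure M" and sub: "Linf_subalgebra_with_constants M E"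
    and closed: "weak_star_closed M E" and p: "1 < p"
    and \<rho>: "0 < \<rho>" "\<rho> < 1" and "0 \<le> g"
    and v_in: "\<And>k. v k \<in> E" and v_Re: "\<And>k. AE x in M. 0 \<le> Re (v k x)"
    and v_cost: "\<And>k. (\<integral>x. cmod (v k x) powr p \<partial>M) \<le> c * (\<rho> ^ k * \<rho> ^ k)"
    and residual: "AE x in M. (\<lambda>k. max 0 (u x - Re (\<Sum>j<k. v j x))) \<longlonglongrightarrow> 0"
  defines "\<Phi> \<equiv> \<lambda>x. exp (- (g * (\<Sum>k. v k x)))"
  shows "\<Phi> \<in> E"
    and "(\<integral>x. cmod (1 - \<Phi> x) powr p \<partial>M) \<le> (g / (1 - \<rho> powr (1/p))) powr p * (c / (1 - \<rho>))"
    and "AE x in M. cmod (\<Phi> x) \<le> exp (- g * u x)"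
proof -
  define q where "q k x = cmod (v k x) powr p / \<rho> ^ k" for k x
  have q_int: "integrable M (q k)" for k
    unfolding q_def using memLinf_integrable_powr[OF fm subalgebra_memLinf[OF sub v_in]] p by simp
  have q_nonneg: "0 \<le> q k x" for k x unfolding q_def using \<rho> by simp
  have "(\<integral>x. q k x \<partial>M) \<le> c * \<rho> ^ k" for k
    unfolding q_def using v_cost[of k] \<rho> by (simp add: divide_le_eq mult.assoc)
  note geometric = q_int q_nonneg this less_imp_le[OF \<rho>(1)] \<rho>(2)
  have v_Re_all: "AE x in M. \<forall>k. 0 \<le> Re (v k x)" using v_Re by (simp add: AE_all_countable)
  have pointwise: "AE x in M. summable (\<lambda>k. v k x) \<and> cmod (\<Phi> x) \<le> exp (- g * u x) \<and>
      cmod (1 - \<Phi> x) powr p \<le> (g / (1 - \<rho> powr (1/p))) powr p * (\<Sum>k. q k x)"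
    using residual AE_summable_of_integral_geometric[OF geometric] v_Re_all
  proof eventually_elim
    case (elim x)
    show ?case unfolding \<Phi>_def q_def
      using exp_neg_series_bounds[OF \<rho> _ \<open>0 \<le> g\<close> elim(3)[rule_format] elim(2)[unfolded q_def] elim(1)] p
      by simp
  qed
  then have summable: "AE x in M. summable (\<lambda>k. v k x)"
    and decay: "AE x in M. cmod (\<Phi> x) \<le> exp (- g * u x)"
    and bound: "AE x in M. cmod (1 - \<Phi> x) powr p \<le> (g / (1 - \<rho> powr (1/p))) powr p * (\<Sum>k. q k x)"
    by (rule eventually_mono, blast)+
  show "\<Phi> \<in> E"
    unfolding \<Phi>_def by (rule subalgebra_exp_neg_series[OF sub closed v_in v_Re summable \<open>0 \<le> g\<close>])
  then have "memLinf M (\<lambda>x. 1 - \<Phi> x)"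
    using subalgebra_add[OF sub subalgebra_const[OF sub, of 1] subalgebra_scale[OF sub _, of _ "-1"]]
    by (simp add: subalgebra_memLinf[OF sub])
  then have "integrable M (\<lambda>x. cmod (1 - \<Phi> x) powr p)"
    using memLinf_integrable_powr[OF fm] p by simp
  then have "(\<integral>x. cmod (1 - \<Phi> x) powr p \<partial>M) \<le>
      (\<integral>x. (g / (1 - \<rho> powr (1/p))) powr p * (\<Sum>k. q k x) \<partial>M)"
    using integrable_suminf_of_integral_geometric[OF geometric]
    by (intro integral_mono_AE[OF _ _ bound]) simp_all
  also have "\<dots> = (g / (1 - \<rho> powr (1/p))) powr p * (\<integral>x. (\<Sum>k. q k x) \<partial>M)" by simp
  also have "\<dots> \<le> (g / (1 - \<rho> powr (1/p))) powr p * (c / (1 - \<rho>))"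
    by (rule mult_left_mono[OF integral_suminf_le_of_integral_geometric[OF geometric]]) simp
  finally show "(\<integral>x. cmod (1 - \<Phi> x) powr p \<partial>M) \<le> (g / (1 - \<rho> powr (1/p))) powr p * (c / (1 - \<rho>))" .
  show "AE x in M. cmod (\<Phi> x) \<le> exp (- g * u x)" by (rule decay)
qed

definition exp_series_constant :: "real \<Rightarrow> real \<Rightarrow> real \<Rightarrow> real \<Rightarrow> real" where
  "exp_series_constant p \<theta> A g = (g / (1 - sqrt \<theta> powr (1/p))) powr p * (A / (1 - sqrt \<theta>))"

lemma approximation_step_exp_construction:
  fixes u :: "'a \<Rightarrow> real"
  assumes fm: "finite_measure M" and sub: "Linf_subalgebra_with_constants M E"
    and closed: "weak_star_closed M E" and p: "1 < p"
    and \<theta>: "0 < \<theta>" "\<theta> < 1" and "0 \<le> A" and step: "approximation_step M p E \<theta> A"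
    and "0 \<le> g" and u: "memLp M p u" "\<And>x. 0 \<le> u x"
  shows "\<exists>\<Phi>\<in>E. (\<integral>x. cmod (1 - \<Phi> x) powr p \<partial>M) \<le> exp_series_constant p \<theta> A g * (\<integral>x. u x powr p \<partial>M) \<and>
    (AE x in M. cmod (\<Phi> x) \<le> exp (- g * u x))"
proof -
  from step have "\<forall>r. \<exists>v. memLp M p r \<and> (\<forall>x. 0 \<le> r x) \<longrightarrow> positive_approximant M p E \<theta> A r v"
    unfolding approximation_step_def by blast
  from choice[OF this] obtain f
    where f: "\<forall>r. memLp M p r \<and> (\<forall>x. 0 \<le> r x) \<longrightarrow> positive_approximant M p E \<theta> A r (f r)"
    by blast
  define v where "v k = f (greedy_residual f u k)" for k
  define \<rho> where "\<rho> = sqrt \<theta>"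
  define U where "U = (\<integral>x. u x powr p \<partial>M)"
  have \<rho>: "0 < \<rho>" "\<rho> < 1" and \<theta>_pow: "\<theta> ^ k = \<rho> ^ k * \<rho> ^ k" for k
    unfolding \<rho>_def using \<theta> by (auto simp: power_mult_distrib[symmetric])
  note increments = greedy_increment_bounds[OF sub p less_imp_le[OF \<theta>(1)] \<open>0 \<le> A\<close> f u]
  have v_in: "v k \<in> E" and v_Re: "AE x in M. 0 \<le> Re (v k x)"
    and v_cost: "(\<integral>x. cmod (v k x) powr p \<partial>M) \<le> A * U * (\<rho> ^ k * \<rho> ^ k)" for k
    using increments[of k] unfolding v_def U_def \<theta>_pow by (simp_all add: mult_ac)
  have residual: "AE x in M. (\<lambda>k. max 0 (u x - Re (\<Sum>j<k. v j x))) \<longlonglongrightarrow> 0"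
    using greedy_residual_AE_tendsto_zero[OF sub p less_imp_le[OF \<theta>(1)] \<theta>(2) f u]
    by (simp only: greedy_residual_def greedy_sum_eq_sum v_def)
  note construction = exp_neg_series_approximation[where v=v and u=u and c="A * U",
      OF fm sub closed p \<rho> \<open>0 \<le> g\<close> v_in v_Re v_cost residual]
  have constant_eq: "(g / (1 - \<rho> powr (1/p))) powr p * (A * U / (1 - \<rho>)) = exp_series_constant p \<theta> A g * U"
    unfolding exp_series_constant_def \<rho>_def by simp
  show ?thesis
    by (rule bexI[OF _ construction(1)])
      (use construction(2)[unfolded constant_eq] construction(3) in \<open>simp add: U_def\<close>)
qed

definition alpha_exp_constant :: "real \<Rightarrow> real \<Rightarrow> real \<Rightarrow> real" where
  "alpha_exp_constant C0 p g = exp_series_constant p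
     (1 - alpha_step_size C0 p / 4) ((alpha_step_size C0 p * (\<bar>C0\<bar> + 1)) powr p) g"

lemma alpha_exp_constant_nonneg:
  assumes "1 < p"
  shows "0 \<le> alpha_exp_constant C0 p g"
  using alpha_step_size_pos[OF assms, of C0] alpha_step_size_le_one[OF assms, of C0]
  unfolding alpha_exp_constant_def exp_series_constant_def by simp

lemma condition_alpha_exp_approximation:
  assumes fm: "finite_measure M" and sub: "Linf_subalgebra_with_constants M E"
    and closed: "weak_star_closed M E" and p: "1 < p" and alpha: "condition_alpha M p C0 E"
    and "0 \<le> g" and \<phi>: "memLp M p \<phi>" "AE x in M. 1 \<le> \<phi> x"
  shows "\<exists>\<Phi>\<in>E. (\<integral>x. cmod (1 - \<Phi> x) powr p \<partial>M) \<le>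
      alpha_exp_constant C0 p g * (\<integral>x. norm (1 - \<phi> x) powr p \<partial>M) \<and>
    (AE x in M. cmod (\<Phi> x) \<le> exp (- (g * (\<phi> x - 1))))"
proof -
  define t where "t = alpha_step_size C0 p"
  define u where "u x = max 0 (\<phi> x - 1)" for x
  have "\<phi> \<in> borel_measurable M" using \<phi>(1) unfolding memLp_def by simp
  then have u_meas: "u \<in> borel_measurable M" unfolding u_def by measurable
  have u: "memLp M p u" "\<And>x. 0 \<le> u x"
    using memLp_of_norm_le[OF \<phi>(1) u_meas] p unfolding u_def by auto
  have "0 < 1 - t / 4" "1 - t / 4 < 1" "0 \<le> (t * (\<bar>C0\<bar> + 1)) powr p"
    using alpha_step_size_pos[OF p, of C0] alpha_step_size_le_one[OF p, of C0]
    unfolding t_def by auto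
  from approximation_step_exp_construction[OF fm sub closed p this
      condition_alpha_approximation_step[OF fm sub p alpha, folded t_def] \<open>0 \<le> g\<close> u]
  obtain \<Phi> where "\<Phi> \<in> E"
    and integral: "(\<integral>x. cmod (1 - \<Phi> x) powr p \<partial>M) \<le> alpha_exp_constant C0 p g * (\<integral>x. u x powr p \<partial>M)"
    and decay: "AE x in M. cmod (\<Phi> x) \<le> exp (- g * u x)"
    unfolding alpha_exp_constant_def t_def by blast
  have "(\<integral>x. u x powr p \<partial>M) = (\<integral>x. norm (1 - \<phi> x) powr p \<partial>M)"
    using \<phi>(2) by (intro integral_cong_AE)
      (use u_meas \<open>\<phi> \<in> borel_measurable M\<close> in \<open>auto simp: u_def elim: eventually_mono\<close>)
  with integral have "(\<integral>x. cmod (1 - \<Phi> x) powr p \<partial>M) \<le>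
      alpha_exp_constant C0 p g * (\<integral>x. norm (1 - \<phi> x) powr p \<partial>M)" by simp
  moreover have "AE x in M. cmod (\<Phi> x) \<le> exp (- (g * (\<phi> x - 1)))"
    using decay \<phi>(2) by eventually_elim (simp add: u_def)
  ultimately show ?thesis using \<open>\<Phi> \<in> E\<close> by blast
qed

theorem lemma2:
  fixes p :: real and \<gamma> :: nat and C0 :: real
  assumes "1 < p" and "2 \<le> \<gamma>"
  shows "\<exists>C::real. \<forall>(M::'a measure) (E::('a \<Rightarrow> complex) set).
           finite_measure M \<longrightarrow>
           Linf_subalgebra_with_constants M E \<longrightarrow>
           weak_star_closed M E \<longrightarrow>
           condition_alpha M p C0 E \<longrightarrow>
           (\<forall>\<phi>::'a \<Rightarrow> real. memLp M p \<phi> \<and> (AE x in M. 1 \<le> \<phi> x) \<longrightarrow>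
              (\<exists>\<Phi>\<in>E.
                 normLp M p (\<lambda>x. 1 - \<Phi> x) \<le> C * normLp M p (\<lambda>x. 1 - \<phi> x) \<and>
                 (AE x in M. cmod (\<Phi> x) \<le> 1 / \<bar>\<phi> x\<bar> ^ \<gamma>)))"
proof (intro exI[of _ "alpha_exp_constant C0 p \<gamma> powr (1/p)"] allI impI)
  fix M :: "'a measure" and E :: "('a \<Rightarrow> complex) set" and \<phi> :: "'a \<Rightarrow> real"
  assume fm: "finite_measure M" and sub: "Linf_subalgebra_with_constants M E"
    and closed: "weak_star_closed M E" and alpha: "condition_alpha M p C0 E"
    and \<phi>: "memLp M p \<phi> \<and> (AE x in M. 1 \<le> \<phi> x)"
  obtain \<Phi> where "\<Phi> \<in> E"
    and integral: "(\<integral>x. cmod (1 - \<Phi> x) powr p \<partial>M) \<le>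
      alpha_exp_constant C0 p \<gamma> * (\<integral>x. norm (1 - \<phi> x) powr p \<partial>M)"
    and decay: "AE x in M. cmod (\<Phi> x) \<le> exp (- (real \<gamma> * (\<phi> x - 1)))"
    using condition_alpha_exp_approximation[OF fm sub closed \<open>1 < p\<close> alpha _ conjunct1[OF \<phi>]
        conjunct2[OF \<phi>], of "real \<gamma>"] by auto
  have "normLp M p (\<lambda>x. 1 - \<Phi> x) \<le>
      alpha_exp_constant C0 p \<gamma> powr (1/p) * normLp M p (\<lambda>x. 1 - \<phi> x)"
    using integral alpha_exp_constant_nonneg[OF \<open>1 < p\<close>, of C0 \<gamma>] \<open>1 < p\<close>
    by (subst normLp_le_iff) (auto simp: powr_powr)
  moreover have "AE x in M. cmod (\<Phi> x) \<le> 1 / \<bar>\<phi> x\<bar> ^ \<gamma>"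
    using decay conjunct2[OF \<phi>]
  proof eventually_elim
    case (elim x)
    then show ?case using exp_neg_mult_le_inverse_power[of "\<phi> x" \<gamma>] by simp
  qed
  ultimately show "\<exists>\<Phi>\<in>E. normLp M p (\<lambda>x. 1 - \<Phi> x) \<le>
      alpha_exp_constant C0 p \<gamma> powr (1/p) * normLp M p (\<lambda>x. 1 - \<phi> x) \<and>
      (AE x in M. cmod (\<Phi> x) \<le> 1 / \<bar>\<phi> x\<bar> ^ \<gamma>)"
    using \<open>\<Phi> \<in> E\<close> by blast
qed

end
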